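(* Let $X$ be a real-valued random variable with a density and finite second moment. For $u\in\mathbb{R}$ let $X_u^+=(X\mid X>u)$ and $X_u^-=(X\mid X\le u)$ (whenever the conditioning events have positive probability). For a random variable $Z$ with independent copy $Z'$, let $\mathrm{SD}[Z]=\sqrt{\tfrac12\mathbb{E}[(Z-Z')^2]}$ and $\mathrm{GMD}[Z]=\mathbb{E}|Z-Z'|$. Let $u^*\in\mathbb{R}$. (i) If the density $f_{X_{u^*}^+}$ of $X_{u^*}^+$ is log-concave, then $\mathrm{SD}[X_u^+]\le\mathrm{GMD}[X_u^+]$ for all $u\ge u^*$. (ii) If the density $f_{X_{u^*}^-}$ of $X_{u^*}^-$ is log-concave, then $\mathrm{SD}[X_u^-]\le\mathrm{GMD}[X_u^-]$ for all $u\le u^*$.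
   Context: Log-concavity is understood on the support of the density. Truncation levels are such that the conditioning events have positive probability and the truncated variables are non-degenerate. *)

theory Defs
  imports "HOL-Probability.Probability"
begin

definition upper_trunc_density :: "'a measure \<Rightarrow> ('a \<Rightarrow> real) \<Rightarrow> (real \<Rightarrow> real) \<Rightarrow> real \<Rightarrow> real \<Rightarrow> real" where
  "upper_trunc_density M X f u x =
     indicator {u<..} x * f x / measure M {\<omega> \<in> space M. u < X \<omega>}"

definition lower_trunc_density :: "'a measure \<Rightarrow> ('a \<Rightarrow> real) \<Rightarrow> (real \<Rightarrow> real) \<Rightarrow> real \<Rightarrow> real \<Rightarrow> real" where
  "lower_trunc_density M X f u x =
     indicator {..u} x * f x / measure M {\<omega> \<in> space M. X \<omega> \<le> u}"

definition log_concave_density :: "(real \<Rightarrow> real) \<Rightarrow> bool" where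
  "log_concave_density g \<longleftrightarrow>
     (\<forall>x y t. 0 < g x \<longrightarrow> 0 < g y \<longrightarrow> 0 \<le> t \<longrightarrow> t \<le> 1 \<longrightarrow>
        0 < g (t * x + (1 - t) * y) \<and>
        t * ln (g x) + (1 - t) * ln (g y) \<le> ln (g (t * x + (1 - t) * y)))"

definition SD_dens :: "(real \<Rightarrow> real) \<Rightarrow> real" where
  "SD_dens g = sqrt (1/2 * (\<integral>x. (\<integral>y. (x - y)\<^sup>2 * g x * g y \<partial>lborel) \<partial>lborel))"

definition GMD_dens :: "(real \<Rightarrow> real) \<Rightarrow> real" where
  "GMD_dens g = (\<integral>x. (\<integral>y. \<bar>x - y\<bar> * g x * g y \<partial>lborel) \<partial>lborel)"

end

theory Submission
  imports Defs
begin

(* Let X, Y be independent with a log-concave density g of finite variance. The Prekopa-Leindler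
   inequality on the real line, which follows from a Brunn-Minkowski inequality for intervals,
   makes marginals of jointly log-concave functions log-concave. Hence the distribution function G of g
   is log-concave, and so is the tail S t = P(X - Y >= t) = \<integral> g z G (z - t) dz. As S 0 >= 1/2,
   log-concavity gives S (s + u) <= 2 S s S u for s, u >= 0, and with R = E (X - Y)^+ = \<integral>_0^\<infinity> S
   this yields E ((X - Y)^+)^2 = 2 \<integral>_0^\<infinity> t S t dt <= 4 R^2. By symmetry SD^2 = E ((X - Y)^+)^2
   and GMD = 2 R, so SD <= GMD. Truncating to a smaller half-line multiplies a log-concave truncated
   density by the indicator of a convex set and a constant, so it stays log-concave. *)

section \<open>Log-concave functions\<close>

(* The multiplicative form, with 0 powr l = 0, lets a log-concave function vanish outside an
   interval; on its support it is log-concave in the usual sense. *)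
definition logconcave :: "(real \<Rightarrow> real) \<Rightarrow> bool" where
  "logconcave \<phi> \<longleftrightarrow> (\<forall>x. 0 \<le> \<phi> x) \<and>
     (\<forall>x y l. 0 \<le> l \<longrightarrow> l \<le> 1 \<longrightarrow> \<phi> x powr l * \<phi> y powr (1 - l) \<le> \<phi> (l * x + (1 - l) * y))"

lemma logconcave_nonneg: "logconcave \<phi> \<Longrightarrow> 0 \<le> \<phi> x"
  by (simp add: logconcave_def)

lemma logconcaveD:
  "logconcave \<phi> \<Longrightarrow> 0 \<le> l \<Longrightarrow> l \<le> 1 \<Longrightarrow> \<phi> x powr l * \<phi> y powr (1 - l) \<le> \<phi> (l * x + (1 - l) * y)"
  by (simp add: logconcave_def)

lemma logconcaveI:
  assumes nonneg: "\<And>x. 0 \<le> \<phi> x"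
    and ineq: "\<And>x y l. 0 < l \<Longrightarrow> l < 1 \<Longrightarrow> \<phi> x powr l * \<phi> y powr (1 - l) \<le> \<phi> (l * x + (1 - l) * y)"
  shows "logconcave \<phi>"
  unfolding logconcave_def
proof (intro conjI allI impI nonneg)
  fix x y l :: real
  assume "0 \<le> l" "l \<le> 1"
  then consider "l = 0" | "l = 1" | "0 < l" "l < 1" by linarith
  then show "\<phi> x powr l * \<phi> y powr (1 - l) \<le> \<phi> (l * x + (1 - l) * y)"
    by cases (use nonneg ineq in auto)
qed

lemma log_concave_density_imp_logconcave:
  assumes nonneg: "\<And>x. 0 \<le> h x" and lc: "log_concave_density h"
  shows "logconcave h"
proof (rule logconcaveI[OF nonneg])
  fix x y l :: real
  assume l: "0 < l" "l < 1"
  show "h x powr l * h y powr (1 - l) \<le> h (l * x + (1 - l) * y)"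
  proof (cases "0 < h x \<and> 0 < h y")
    case True
    with lc l have pos: "0 < h (l * x + (1 - l) * y)"
      and ln_le: "l * ln (h x) + (1 - l) * ln (h y) \<le> ln (h (l * x + (1 - l) * y))"
      unfolding log_concave_density_def by auto
    have "h x powr l * h y powr (1 - l) = exp (l * ln (h x) + (1 - l) * ln (h y))"
      using True by (simp add: powr_def exp_add)
    also have "\<dots> \<le> h (l * x + (1 - l) * y)"
      using ln_le pos by (metis exp_le_cancel_iff exp_ln)
    finally show ?thesis .
  next
    case False
    then have "h x = 0 \<or> h y = 0" using nonneg[of x] nonneg[of y] by linarith
    then show ?thesis using nonneg by auto
  qed
qed

lemma powr_mult_powr_le_mult:
  fixes a b c d e f l :: real
  assumes "0 \<le> a" "0 \<le> b" "0 \<le> c" "0 \<le> d"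
    and ac: "a powr l * c powr (1 - l) \<le> e" and bd: "b powr l * d powr (1 - l) \<le> f"
  shows "(a * b) powr l * (c * d) powr (1 - l) \<le> e * f"
proof -
  have "(a * b) powr l * (c * d) powr (1 - l) = (a powr l * c powr (1 - l)) * (b powr l * d powr (1 - l))"
    using assms by (simp add: powr_mult mult_ac)
  also have "\<dots> \<le> e * f"
    using ac bd by (intro mult_mono) (auto intro: order_trans[OF _ ac])
  finally show ?thesis .
qed

lemma logconcave_const: "0 \<le> c \<Longrightarrow> logconcave (\<lambda>_. c)"
  by (rule logconcaveI) (auto simp: powr_add[symmetric] order_le_less)

lemma logconcave_mult:
  assumes \<phi>: "logconcave \<phi>" and \<psi>: "logconcave \<psi>"
  shows "logconcave (\<lambda>x. \<phi> x * \<psi> x)"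
proof (rule logconcaveI)
  fix x y l :: real
  assume "0 < l" "l < 1"
  then show "(\<phi> x * \<psi> x) powr l * (\<phi> y * \<psi> y) powr (1 - l) \<le> \<phi> (l * x + (1 - l) * y) * \<psi> (l * x + (1 - l) * y)"
    using \<phi> \<psi> by (intro powr_mult_powr_le_mult) (auto simp: logconcave_nonneg intro: logconcaveD)
qed (use \<phi> \<psi> in \<open>simp add: logconcave_nonneg\<close>)

lemma min_powr_mult_min_powr_le:
  fixes a b M l :: real
  assumes "0 \<le> a" "0 \<le> b" "0 \<le> M" "0 \<le> l" "l \<le> 1"
  shows "min a M powr l * min b M powr (1 - l) \<le> min (a powr l * b powr (1 - l)) M"
proof -
  have "min a M powr l * min b M powr (1 - l) \<le> a powr l * b powr (1 - l)"
    using assms by (intro mult_mono powr_mono2) auto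
  moreover have "min a M powr l * min b M powr (1 - l) \<le> M powr l * M powr (1 - l)"
    using assms by (intro mult_mono powr_mono2) auto
  moreover have "M powr l * M powr (1 - l) = M"
    using assms by (cases "M = 0") (simp_all add: powr_add[symmetric])
  ultimately show ?thesis by simp
qed

lemma logconcave_min_const:
  assumes lc: "logconcave \<phi>" and "0 \<le> M"
  shows "logconcave (\<lambda>x. min (\<phi> x) M)"
proof (rule logconcaveI)
  fix x y l :: real
  assume "0 < l" "l < 1"
  then have "min (\<phi> x) M powr l * min (\<phi> y) M powr (1 - l) \<le> min (\<phi> x powr l * \<phi> y powr (1 - l)) M"
    using lc \<open>0 \<le> M\<close> by (intro min_powr_mult_min_powr_le) (auto simp: logconcave_nonneg)
  also have "\<dots> \<le> min (\<phi> (l * x + (1 - l) * y)) M"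
    using lc \<open>0 < l\<close> \<open>l < 1\<close> by (intro min.mono logconcaveD) auto
  finally show "min (\<phi> x) M powr l * min (\<phi> y) M powr (1 - l) \<le> min (\<phi> (l * x + (1 - l) * y)) M" .
qed (use lc \<open>0 \<le> M\<close> in \<open>simp add: logconcave_nonneg\<close>)

lemma logconcave_indicator:
  fixes S :: "real set"
  assumes "convex S"
  shows "logconcave (indicator S)"
proof (rule logconcaveI)
  fix x y l :: real
  assume "0 < l" "l < 1"
  then have "x \<in> S \<Longrightarrow> y \<in> S \<Longrightarrow> l * x + (1 - l) * y \<in> S"
    using convexD[OF assms, of x y l "1 - l"] by simp
  then show "indicator S x powr l * indicator S y powr (1 - l) \<le> (indicator S (l * x + (1 - l) * y) :: real)"
    by (auto simp: indicator_def)
qed simp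

lemma convex_superlevel_logconcave:
  assumes lc: "logconcave \<phi>" and "0 \<le> r"
  shows "convex {x. r < \<phi> x}"
proof (rule convexI)
  fix x y u v :: real
  assume x: "x \<in> {x. r < \<phi> x}" and y: "y \<in> {x. r < \<phi> x}" and uv: "0 \<le> u" "0 \<le> v" "u + v = 1"
  have v: "v = 1 - u" using uv by simp
  define m where "m = min (\<phi> x) (\<phi> y)"
  have "r < m" using x y by (simp add: m_def)
  also have "m = m powr u * m powr (1 - u)"
    using \<open>r < m\<close> \<open>0 \<le> r\<close> by (simp add: powr_add[symmetric])
  also have "\<dots> \<le> \<phi> x powr u * \<phi> y powr (1 - u)"
    using \<open>r < m\<close> \<open>0 \<le> r\<close> uv by (intro mult_mono powr_mono2) (auto simp: m_def)
  also have "\<dots> \<le> \<phi> (u * x + (1 - u) * y)"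
    using lc uv by (intro logconcaveD) auto
  finally show "u *\<^sub>R x + v *\<^sub>R y \<in> {x. r < \<phi> x}"
    by (simp add: v)
qed

lemma logconcave_add_mult_le:
  assumes lc: "logconcave \<phi>" and "0 \<le> s" "0 \<le> t"
  shows "\<phi> (s + t) * \<phi> 0 \<le> \<phi> s * \<phi> t"
proof (cases "s + t = 0")
  case True
  with assms have "s = 0" "t = 0" by auto
  then show ?thesis by simp
next
  case False
  with assms have st: "0 < s + t" by simp
  define l where "l = t / (s + t)"
  have l: "0 \<le> l" "l \<le> 1" using assms st by (auto simp: l_def)
  have s_eq: "l * 0 + (1 - l) * (s + t) = s" and t_eq: "(1 - l) * 0 + (1 - (1 - l)) * (s + t) = t"
    using st by (simp_all add: l_def field_simps)
  have nonneg: "\<And>x. 0 \<le> \<phi> x" using lc by (simp add: logconcave_nonneg)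
  have powr_split: "a powr l * a powr (1 - l) = a" if "0 \<le> a" for a
    using that by (simp add: powr_add[symmetric])
  have "\<phi> 0 powr l * \<phi> (s + t) powr (1 - l) \<le> \<phi> (l * 0 + (1 - l) * (s + t))"
    using l by (intro logconcaveD[OF lc])
  then have le_s: "\<phi> 0 powr l * \<phi> (s + t) powr (1 - l) \<le> \<phi> s"
    unfolding s_eq .
  have "\<phi> 0 powr (1 - l) * \<phi> (s + t) powr (1 - (1 - l)) \<le> \<phi> ((1 - l) * 0 + (1 - (1 - l)) * (s + t))"
    using l by (intro logconcaveD[OF lc]) auto
  then have le_t: "\<phi> 0 powr (1 - l) * \<phi> (s + t) powr l \<le> \<phi> t"
    unfolding t_eq by simp
  have "\<phi> (s + t) * \<phi> 0 = (\<phi> 0 powr l * \<phi> 0 powr (1 - l)) * (\<phi> (s + t) powr l * \<phi> (s + t) powr (1 - l))"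
    by (simp only: powr_split nonneg mult.commute)
  also have "\<dots> = (\<phi> 0 powr l * \<phi> (s + t) powr (1 - l)) * (\<phi> 0 powr (1 - l) * \<phi> (s + t) powr l)"
    by (simp only: ac_simps)
  also have "\<dots> \<le> \<phi> s * \<phi> t"
    using le_s le_t by (intro mult_mono) (simp_all add: nonneg)
  finally show ?thesis .
qed

section \<open>Brunn--Minkowski inequality on the real line\<close>

lemma emeasure_lborel_le_of_diff_le:
  fixes A :: "real set"
  assumes diff: "\<And>x y. x \<in> A \<Longrightarrow> y \<in> A \<Longrightarrow> y - x \<le> e"
  shows "emeasure lborel A \<le> ennreal e"
proof (cases "A = {}")
  case False
  then obtain x0 where x0: "x0 \<in> A" by auto
  have bdd: "bdd_above A" "bdd_below A"
    using diff[OF x0] diff[OF _ x0]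
    by (auto intro!: bdd_aboveI[of _ "x0 + e"] bdd_belowI[of _ "x0 - e"] simp: algebra_simps)
  have "Sup A \<le> Inf A + e"
  proof (rule cSup_least[OF False])
    fix x
    assume "x \<in> A"
    then have "x - e \<le> Inf A"
      using diff by (intro cInf_greatest[OF False]) (fastforce simp: algebra_simps)
    then show "x \<le> Inf A + e" by simp
  qed
  have "emeasure lborel A \<le> emeasure lborel {Inf A..Sup A}"
    using bdd by (intro emeasure_mono) (auto intro: cInf_lower cSup_upper)
  also have "\<dots> \<le> ennreal e"
    using \<open>Sup A \<le> Inf A + e\<close> by (simp add: emeasure_lborel_Icc_eq)
  finally show ?thesis .
qed simp

lemma measure_lborel_le_of_diff_le:
  fixes A :: "real set"
  assumes diff: "\<And>x y. x \<in> A \<Longrightarrow> y \<in> A \<Longrightarrow> y - x \<le> e" and "0 \<le> e"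
  shows "emeasure lborel A = ennreal (measure lborel A)" and "measure lborel A \<le> e"
proof -
  have le: "emeasure lborel A \<le> ennreal e"
    by (rule emeasure_lborel_le_of_diff_le[OF diff])
  then show eq: "emeasure lborel A = ennreal (measure lborel A)"
    by (intro emeasure_eq_ennreal_measure) (auto simp: top_unique)
  show "measure lborel A \<le> e"
    using le \<open>0 \<le> e\<close> by (simp add: eq)
qed

lemma closed_segment_subset_convex_comb:
  fixes I J :: "real set"
  assumes I: "convex I" "x1 \<in> I" "x2 \<in> I" and J: "convex J" "y1 \<in> J" "y2 \<in> J"
  shows "closed_segment (l * x1 + (1 - l) * y1) (l * x2 + (1 - l) * y2)
    \<subseteq> {l * x + (1 - l) * y | x y. x \<in> I \<and> y \<in> J}"
proof
  fix z
  assume "z \<in> closed_segment (l * x1 + (1 - l) * y1) (l * x2 + (1 - l) * y2)"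
  then obtain u where u: "0 \<le> u" "u \<le> 1"
    and z: "z = (1 - u) * (l * x1 + (1 - l) * y1) + u * (l * x2 + (1 - l) * y2)"
    by (auto simp: closed_segment_def)
  have "(1 - u) * x1 + u * x2 \<in> I" "(1 - u) * y1 + u * y2 \<in> J"
    using convexD[OF I, of "1 - u" u] convexD[OF J, of "1 - u" u] u by auto
  moreover have "z = l * ((1 - u) * x1 + u * x2) + (1 - l) * ((1 - u) * y1 + u * y2)"
    unfolding z by (simp add: algebra_simps)
  ultimately show "z \<in> {l * x + (1 - l) * y | x y. x \<in> I \<and> y \<in> J}" by blast
qed

lemma brunn_minkowski_convex:
  fixes I J K :: "real set"
  assumes l: "0 < l" "l < 1"
    and I: "convex I" "I \<noteq> {}" and J: "convex J" "J \<noteq> {}"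
    and K: "K \<in> sets borel" and sub: "\<And>x y. x \<in> I \<Longrightarrow> y \<in> J \<Longrightarrow> l * x + (1 - l) * y \<in> K"
  shows "ennreal l * emeasure lborel I + ennreal (1 - l) * emeasure lborel J \<le> emeasure lborel K"
proof (cases "emeasure lborel K = \<infinity>")
  case False
  define k where "k = measure lborel K"
  have K_eq: "emeasure lborel K = ennreal k"
    using False by (simp add: k_def emeasure_eq_ennreal_measure)
  have span: "l * (x2 - x1) + (1 - l) * (y2 - y1) \<le> k"
    if "x1 \<in> I" "x2 \<in> I" "y1 \<in> J" "y2 \<in> J" for x1 x2 y1 y2
  proof -
    let ?a = "l * x1 + (1 - l) * y1" and ?b = "l * x2 + (1 - l) * y2"
    have "closed_segment ?a ?b \<subseteq> K"
      using closed_segment_subset_convex_comb[OF I(1) that(1,2) J(1) that(3,4), of l] sub by blast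
    then have "emeasure lborel (closed_segment ?a ?b) \<le> ennreal k"
      unfolding K_eq[symmetric] using K by (intro emeasure_mono) auto
    then have "\<bar>?b - ?a\<bar> \<le> k"
      by (auto simp: closed_segment_eq_real_ivl ennreal_le_iff2 k_def split: if_splits)
    then show ?thesis by (simp add: algebra_simps)
  qed
  obtain x0 y0 where x0: "x0 \<in> I" and y0: "y0 \<in> J" using I J by auto
  have I_bound: "l * measure lborel I + (1 - l) * (y2 - y1) \<le> k" if "y1 \<in> J" "y2 \<in> J" for y1 y2
  proof -
    have "measure lborel I \<le> (k - (1 - l) * (y2 - y1)) / l"
      using span[OF _ _ that] span[OF x0 x0 that] l
      by (intro measure_lborel_le_of_diff_le(2)) (auto simp: field_simps)
    then show ?thesis using l by (simp add: field_simps)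
  qed
  have J_bound: "measure lborel J \<le> (k - l * measure lborel I) / (1 - l)"
    using I_bound I_bound[OF y0 y0] l
    by (intro measure_lborel_le_of_diff_le(2)) (auto simp: field_simps)
  have I_eq: "emeasure lborel I = ennreal (measure lborel I)"
    using span[OF _ _ y0 y0] span[OF x0 x0 y0 y0] l
    by (intro measure_lborel_le_of_diff_le(1)[of I "k / l"]) (auto simp: field_simps)
  have J_eq: "emeasure lborel J = ennreal (measure lborel J)"
    using I_bound I_bound[OF y0 y0] l
    by (intro measure_lborel_le_of_diff_le(1)[of J "(k - l * measure lborel I) / (1 - l)"]) (auto simp: field_simps)
  have "l * measure lborel I + (1 - l) * measure lborel J \<le> k"
    using J_bound l by (simp add: field_simps)
  then show ?thesis
    using l
    by (simp add: I_eq J_eq K_eq ennreal_mult[symmetric] ennreal_plus[symmetric] del: ennreal_plus)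
       (erule ennreal_leI)
qed simp

lemma brunn_minkowski_superlevel:
  fixes a b c :: "real \<Rightarrow> real"
  assumes l: "0 < l" "l < 1" and a: "logconcave a" and b: "logconcave b"
    and [measurable]: "c \<in> borel_measurable borel"
    and hyp: "\<And>x y. a x powr l * b y powr (1 - l) \<le> c (l * x + (1 - l) * y)"
    and r: "0 \<le> r" "r < a x0" and s: "0 \<le> s" "s < b y0"
  shows "ennreal l * emeasure lborel {x. r < a x} + ennreal (1 - l) * emeasure lborel {x. s < b x}
    \<le> emeasure lborel {x. r powr l * s powr (1 - l) < c x}"
proof (rule brunn_minkowski_convex[OF l])
  show "convex {x. r < a x}" "convex {x. s < b x}"
    using a b r s by (auto intro: convex_superlevel_logconcave)
  show "{x. r < a x} \<noteq> {}" "{x. s < b x} \<noteq> {}" using r s by auto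
  show "{x. r powr l * s powr (1 - l) < c x} \<in> sets borel" by measurable
  fix x y
  assume "x \<in> {x. r < a x}" "y \<in> {x. s < b x}"
  then have "r powr l * s powr (1 - l) < a x powr l * b y powr (1 - l)"
    using l r s by (intro mult_strict_mono powr_less_mono2) auto
  also have "\<dots> \<le> c (l * x + (1 - l) * y)" by (rule hyp)
  finally show "l * x + (1 - l) * y \<in> {x. r powr l * s powr (1 - l) < c x}" by simp
qed

section \<open>Prekopa--Leindler inequality on the real line\<close>

definition superlevel_integral :: "(real \<Rightarrow> real) \<Rightarrow> real \<Rightarrow> ennreal" where
  "superlevel_integral \<phi> M = (\<integral>\<^sup>+\<rho>\<in>{0<..<1}. emeasure lborel {x. M * \<rho> < \<phi> x} \<partial>lborel)"

lemma nn_integral_min_eq_superlevel_integral: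
  fixes c :: "real \<Rightarrow> real"
  assumes C: "0 < C" and [measurable]: "c \<in> borel_measurable borel" and c_nonneg: "\<And>x. 0 \<le> c x"
  shows "(\<integral>\<^sup>+x. ennreal (min (c x) C) \<partial>lborel) = C * superlevel_integral c C"
proof -
  have "superlevel_integral c C
      = (\<integral>\<^sup>+\<rho>. (\<integral>\<^sup>+x. indicator {x. C * \<rho> < c x} x * indicator {0<..<1} \<rho> \<partial>lborel) \<partial>lborel)"
    unfolding superlevel_integral_def by (intro nn_integral_cong) (simp add: nn_integral_multc)
  also have "\<dots> = (\<integral>\<^sup>+x. (\<integral>\<^sup>+\<rho>. indicator {x. C * \<rho> < c x} x * indicator {0<..<1} \<rho> \<partial>lborel) \<partial>lborel)"
    by (rule lborel_pair.Fubini') measurable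
  also have "\<dots> = (\<integral>\<^sup>+x. ennreal (min 1 (c x / C)) \<partial>lborel)"
  proof (intro nn_integral_cong)
    fix x
    have "(\<lambda>\<rho>. indicator {x. C * \<rho> < c x} x * indicator {0<..<1} \<rho> :: ennreal) = indicator {0<..<min 1 (c x / C)}"
      using C by (auto simp: indicator_def fun_eq_iff field_simps)
    then show "(\<integral>\<^sup>+\<rho>. indicator {x. C * \<rho> < c x} x * indicator {0<..<1} \<rho> \<partial>lborel) = ennreal (min 1 (c x / C))"
      using C c_nonneg[of x] by simp
  qed
  finally have "C * superlevel_integral c C = (\<integral>\<^sup>+x. ennreal C * ennreal (min 1 (c x / C)) \<partial>lborel)"
    by (simp add: nn_integral_cmult)
  also have "\<dots> = (\<integral>\<^sup>+x. ennreal (min (c x) C) \<partial>lborel)"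
    using C c_nonneg by (intro nn_integral_cong) (simp add: ennreal_mult[symmetric] min_def field_simps)
  finally show ?thesis ..
qed

lemma nn_integral_eq_Sup_mult_superlevel_integral:
  fixes \<phi> :: "real \<Rightarrow> real"
  assumes [measurable]: "\<phi> \<in> borel_measurable borel" and nonneg: "\<And>x. 0 \<le> \<phi> x"
    and bdd: "bdd_above (range \<phi>)"
  shows "(\<integral>\<^sup>+x. ennreal (\<phi> x) \<partial>lborel) = Sup (range \<phi>) * superlevel_integral \<phi> (Sup (range \<phi>))"
proof (cases "Sup (range \<phi>) = 0")
  case True
  with bdd nonneg have "\<phi> x = 0" for x
    by (metis cSup_upper order_antisym rangeI)
  with True show ?thesis by simp
next
  case False
  with bdd nonneg have "0 < Sup (range \<phi>)"
    by (metis cSup_upper order_le_less order_trans rangeI)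
  moreover have "min (\<phi> x) (Sup (range \<phi>)) = \<phi> x" for x
    using bdd by (simp add: cSup_upper)
  ultimately show ?thesis
    using nn_integral_min_eq_superlevel_integral[of "Sup (range \<phi>)" \<phi>] nonneg by simp
qed

lemma superlevel_integral_brunn_minkowski:
  fixes a b c :: "real \<Rightarrow> real"
  assumes l: "0 < l" "l < 1" and a: "logconcave a" and b: "logconcave b"
    and [measurable]: "a \<in> borel_measurable borel" "b \<in> borel_measurable borel" "c \<in> borel_measurable borel"
    and hyp: "\<And>x y. a x powr l * b y powr (1 - l) \<le> c (l * x + (1 - l) * y)"
    and A_pos: "0 < Sup (range a)" and B_pos: "0 < Sup (range b)"
  shows "ennreal l * superlevel_integral a (Sup (range a)) + ennreal (1 - l) * superlevel_integral b (Sup (range b))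
    \<le> superlevel_integral c (Sup (range a) powr l * Sup (range b) powr (1 - l))"
proof -
  define A B C where "A = Sup (range a)" and "B = Sup (range b)" and "C = A powr l * B powr (1 - l)"
  have level: "ennreal l * emeasure lborel {x. A * \<rho> < a x} + ennreal (1 - l) * emeasure lborel {x. B * \<rho> < b x}
      \<le> emeasure lborel {x. C * \<rho> < c x}" if \<rho>: "0 < \<rho>" "\<rho> < 1" for \<rho>
  proof -
    have "A * \<rho> < Sup (range a)" "B * \<rho> < Sup (range b)"
      using A_pos B_pos \<rho> by (simp_all add: A_def B_def)
    then obtain x0 y0 where x0: "A * \<rho> < a x0" and y0: "B * \<rho> < b y0"
      by (auto elim!: less_cSupE)
    have "(A * \<rho>) powr l * (B * \<rho>) powr (1 - l) = C * (\<rho> powr l * \<rho> powr (1 - l))"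
      using A_pos B_pos \<rho> by (simp add: A_def B_def C_def powr_mult mult_ac)
    also have "\<dots> = C * \<rho>"
      using \<rho> by (simp add: powr_add[symmetric])
    finally have C_eq: "(A * \<rho>) powr l * (B * \<rho>) powr (1 - l) = C * \<rho>" .
    have "ennreal l * emeasure lborel {x. A * \<rho> < a x} + ennreal (1 - l) * emeasure lborel {x. B * \<rho> < b x}
        \<le> emeasure lborel {x. (A * \<rho>) powr l * (B * \<rho>) powr (1 - l) < c x}"
      by (rule brunn_minkowski_superlevel[OF l a b _ hyp _ x0 _ y0]) (use A_pos B_pos \<rho> in \<open>auto simp: A_def B_def\<close>)
    then show ?thesis unfolding C_eq .
  qed
  have "ennreal l * superlevel_integral a A + ennreal (1 - l) * superlevel_integral b B
      = (\<integral>\<^sup>+\<rho>\<in>{0<..<1}. ennreal l * emeasure lborel {x. A * \<rho> < a x}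
          + ennreal (1 - l) * emeasure lborel {x. B * \<rho> < b x} \<partial>lborel)"
    unfolding superlevel_integral_def by (simp add: nn_integral_add nn_integral_cmult distrib_right mult.assoc)
  also have "\<dots> \<le> superlevel_integral c C"
    unfolding superlevel_integral_def using level by (intro nn_integral_mono) (auto simp: indicator_def)
  finally show ?thesis by (simp add: A_def B_def C_def)
qed

lemma ennreal_eq_divide_of_eq_mult:
  assumes eq: "ennreal \<gamma> = M * X" and "0 < M" "0 \<le> \<gamma>"
  shows "X = ennreal (\<gamma> / M)"
proof -
  have "X = ennreal (1 / M) * (ennreal M * X)"
    using \<open>0 < M\<close> by (simp add: mult.assoc[symmetric] ennreal_mult[symmetric])
  also have "\<dots> = ennreal (1 / M) * ennreal \<gamma>"
    by (simp only: eq)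
  also have "\<dots> = ennreal (\<gamma> / M)"
    using \<open>0 < M\<close> \<open>0 \<le> \<gamma>\<close> by (simp add: ennreal_mult[symmetric])
  finally show ?thesis .
qed

lemma prekopa_leindler_bounded:
  fixes a b c :: "real \<Rightarrow> real"
  assumes l: "0 < l" "l < 1" and a: "logconcave a" and b: "logconcave b" and c_nonneg: "\<And>x. 0 \<le> c x"
    and [measurable]: "a \<in> borel_measurable borel" "b \<in> borel_measurable borel" "c \<in> borel_measurable borel"
    and bdd: "bdd_above (range a)" "bdd_above (range b)"
    and hyp: "\<And>x y. a x powr l * b y powr (1 - l) \<le> c (l * x + (1 - l) * y)"
    and fin: "(\<integral>\<^sup>+x. ennreal (a x) \<partial>lborel) < \<infinity>" "(\<integral>\<^sup>+x. ennreal (b x) \<partial>lborel) < \<infinity>"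
  shows "ennreal (enn2real (\<integral>\<^sup>+x. ennreal (a x) \<partial>lborel) powr l * enn2real (\<integral>\<^sup>+x. ennreal (b x) \<partial>lborel) powr (1 - l))
    \<le> (\<integral>\<^sup>+x. ennreal (c x) \<partial>lborel)"
proof -
  define \<alpha> where "\<alpha> = enn2real (\<integral>\<^sup>+x. ennreal (a x) \<partial>lborel)"
  define \<beta> where "\<beta> = enn2real (\<integral>\<^sup>+x. ennreal (b x) \<partial>lborel)"
  define A B C where "A = Sup (range a)" and "B = Sup (range b)" and "C = A powr l * B powr (1 - l)"
  have \<alpha>_eq: "ennreal \<alpha> = A * superlevel_integral a A" and \<beta>_eq: "ennreal \<beta> = B * superlevel_integral b B"
    using fin a b bdd nn_integral_eq_Sup_mult_superlevel_integral[of a] nn_integral_eq_Sup_mult_superlevel_integral[of b]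
    by (simp_all add: \<alpha>_def \<beta>_def A_def B_def ennreal_enn2real less_top logconcave_nonneg)
  show ?thesis
  proof (cases "\<alpha> = 0 \<or> \<beta> = 0")
    case True
    then show ?thesis unfolding \<alpha>_def[symmetric] \<beta>_def[symmetric] by auto
  next
    case False
    moreover have "0 \<le> \<alpha>" "0 \<le> \<beta>" by (simp_all add: \<alpha>_def \<beta>_def)
    ultimately have \<alpha>: "0 < \<alpha>" and \<beta>: "0 < \<beta>" by auto
    then have "A \<noteq> 0" "B \<noteq> 0" using \<alpha>_eq \<beta>_eq by auto
    moreover have "0 \<le> A" "0 \<le> B"
      using a b bdd by (auto simp: A_def B_def intro: order_trans[OF logconcave_nonneg cSup_upper])
    ultimately have A: "0 < A" and B: "0 < B" by auto
    have "\<alpha> powr l * \<beta> powr (1 - l) = C * ((\<alpha> / A) powr l * (\<beta> / B) powr (1 - l))"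
      using A B \<alpha> \<beta> by (simp add: C_def powr_divide field_simps)
    also have "\<dots> \<le> C * (l * (\<alpha> / A) + (1 - l) * (\<beta> / B))"
      using l A B \<alpha> \<beta> by (intro mult_left_mono Youngs_inequality_0) (auto simp: C_def)
    finally have "ennreal (\<alpha> powr l * \<beta> powr (1 - l))
        \<le> C * (ennreal l * superlevel_integral a A + ennreal (1 - l) * superlevel_integral b B)"
      using l A B \<alpha> \<beta> ennreal_eq_divide_of_eq_mult[OF \<alpha>_eq A] ennreal_eq_divide_of_eq_mult[OF \<beta>_eq B]
      by (simp add: C_def ennreal_mult[symmetric] ennreal_plus[symmetric] del: ennreal_plus)
    also have "\<dots> \<le> C * superlevel_integral c C"
      using superlevel_integral_brunn_minkowski[OF l a b _ _ _ hyp] A B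
      by (intro mult_left_mono) (simp_all add: A_def B_def C_def)
    also have "\<dots> = (\<integral>\<^sup>+x. ennreal (min (c x) C) \<partial>lborel)"
      using A B c_nonneg by (simp add: C_def nn_integral_min_eq_superlevel_integral)
    also have "\<dots> \<le> (\<integral>\<^sup>+x. ennreal (c x) \<partial>lborel)"
      by (intro nn_integral_mono ennreal_leI) simp
    finally show ?thesis by (simp add: \<alpha>_def \<beta>_def)
  qed
qed

lemma LIMSEQ_nn_integral_min:
  fixes a :: "real \<Rightarrow> real"
  assumes [measurable]: "a \<in> borel_measurable borel"
    and fin: "(\<integral>\<^sup>+x. ennreal (a x) \<partial>lborel) < \<infinity>"
  shows "(\<lambda>n. enn2real (\<integral>\<^sup>+x. ennreal (min (a x) (real n)) \<partial>lborel))
    \<longlonglongrightarrow> enn2real (\<integral>\<^sup>+x. ennreal (a x) \<partial>lborel)"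
proof -
  have "(\<lambda>n. \<integral>\<^sup>+x. ennreal (min (a x) (real n)) \<partial>lborel) \<longlonglongrightarrow> (\<integral>\<^sup>+x. ennreal (a x) \<partial>lborel)"
  proof (rule nn_integral_LIMSEQ)
    show "incseq (\<lambda>n x. ennreal (min (a x) (real n)))"
      by (intro incseq_SucI le_funI ennreal_leI) auto
    fix x
    obtain N :: nat where "a x \<le> real N" using real_arch_simple by blast
    then show "(\<lambda>n. ennreal (min (a x) (real n))) \<longlonglongrightarrow> ennreal (a x)"
      by (intro tendsto_eventually eventually_sequentiallyI[of N]) auto
  qed simp
  then have "(\<lambda>n. \<integral>\<^sup>+x. ennreal (min (a x) (real n)) \<partial>lborel)
      \<longlonglongrightarrow> ennreal (enn2real (\<integral>\<^sup>+x. ennreal (a x) \<partial>lborel))"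
    using fin by (simp add: ennreal_enn2real less_top)
  then show ?thesis by (rule tendsto_enn2real) simp
qed

lemma prekopa_leindler:
  fixes a b c :: "real \<Rightarrow> real"
  assumes l: "0 < l" "l < 1" and a: "logconcave a" and b: "logconcave b" and c_nonneg: "\<And>x. 0 \<le> c x"
    and [measurable]: "a \<in> borel_measurable borel" "b \<in> borel_measurable borel" "c \<in> borel_measurable borel"
    and hyp: "\<And>x y. a x powr l * b y powr (1 - l) \<le> c (l * x + (1 - l) * y)"
    and fin: "(\<integral>\<^sup>+x. ennreal (a x) \<partial>lborel) < \<infinity>" "(\<integral>\<^sup>+x. ennreal (b x) \<partial>lborel) < \<infinity>"
  shows "ennreal (enn2real (\<integral>\<^sup>+x. ennreal (a x) \<partial>lborel) powr l * enn2real (\<integral>\<^sup>+x. ennreal (b x) \<partial>lborel) powr (1 - l))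
    \<le> (\<integral>\<^sup>+x. ennreal (c x) \<partial>lborel)"
proof (cases "(\<integral>\<^sup>+x. ennreal (c x) \<partial>lborel) = \<infinity>")
  case False
  define \<gamma> where "\<gamma> = enn2real (\<integral>\<^sup>+x. ennreal (c x) \<partial>lborel)"
  have \<gamma>_eq: "(\<integral>\<^sup>+x. ennreal (c x) \<partial>lborel) = ennreal \<gamma>"
    using False by (simp add: \<gamma>_def ennreal_enn2real less_top)
  define trunc where "trunc \<phi> n = enn2real (\<integral>\<^sup>+x. ennreal (min (\<phi> x) (real n)) \<partial>lborel)" for \<phi> :: "real \<Rightarrow> real" and n :: nat
  have bound: "trunc a n powr l * trunc b n powr (1 - l) \<le> \<gamma>" for n
  proof -
    have "ennreal (trunc a n powr l * trunc b n powr (1 - l)) \<le> (\<integral>\<^sup>+x. ennreal (min (c x) (real n)) \<partial>lborel)"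
      unfolding trunc_def
    proof (rule prekopa_leindler_bounded[OF l logconcave_min_const[OF a] logconcave_min_const[OF b]])
      have "(\<integral>\<^sup>+x. ennreal (min (\<phi> x) (real n)) \<partial>lborel) < \<infinity>" if "(\<integral>\<^sup>+x. ennreal (\<phi> x) \<partial>lborel) < \<infinity>" for \<phi>
        using that by (rule le_less_trans[rotated]) (intro nn_integral_mono ennreal_leI, simp)
      then show "(\<integral>\<^sup>+x. ennreal (min (a x) (real n)) \<partial>lborel) < \<infinity>" "(\<integral>\<^sup>+x. ennreal (min (b x) (real n)) \<partial>lborel) < \<infinity>"
        using fin by auto
      show "bdd_above (range (\<lambda>x. min (a x) (real n)))" "bdd_above (range (\<lambda>x. min (b x) (real n)))"
        by (auto intro!: bdd_aboveI[of _ "real n"])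
      fix x y
      have "min (a x) (real n) powr l * min (b y) (real n) powr (1 - l) \<le> min (a x powr l * b y powr (1 - l)) (real n)"
        using a b l by (intro min_powr_mult_min_powr_le) (auto simp: logconcave_nonneg)
      also have "\<dots> \<le> min (c (l * x + (1 - l) * y)) (real n)"
        using hyp by (rule min.mono) simp
      finally show "min (a x) (real n) powr l * min (b y) (real n) powr (1 - l) \<le> min (c (l * x + (1 - l) * y)) (real n)" .
    qed (use c_nonneg in auto)
    also have "\<dots> \<le> ennreal \<gamma>"
      unfolding \<gamma>_eq[symmetric] by (intro nn_integral_mono ennreal_leI) simp
    finally show ?thesis by (simp add: \<gamma>_def)
  qed
  have "(\<lambda>n. trunc a n powr l * trunc b n powr (1 - l))
      \<longlonglongrightarrow> enn2real (\<integral>\<^sup>+x. ennreal (a x) \<partial>lborel) powr l * enn2real (\<integral>\<^sup>+x. ennreal (b x) \<partial>lborel) powr (1 - l)"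
    unfolding trunc_def using l fin by (intro tendsto_mult tendsto_powr' LIMSEQ_nn_integral_min) auto
  then have "enn2real (\<integral>\<^sup>+x. ennreal (a x) \<partial>lborel) powr l * enn2real (\<integral>\<^sup>+x. ennreal (b x) \<partial>lborel) powr (1 - l) \<le> \<gamma>"
    by (rule LIMSEQ_le_const2) (use bound in auto)
  then show ?thesis unfolding \<gamma>_eq by (rule ennreal_leI)
qed simp

lemma logconcave_nn_integral:
  fixes F :: "real \<Rightarrow> real \<Rightarrow> real"
  assumes nonneg: "\<And>x t. 0 \<le> F x t"
    and joint: "\<And>x y s t l. 0 \<le> l \<Longrightarrow> l \<le> 1 \<Longrightarrow>
      F x s powr l * F y t powr (1 - l) \<le> F (l * x + (1 - l) * y) (l * s + (1 - l) * t)"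
    and [measurable]: "\<And>t. (\<lambda>x. F x t) \<in> borel_measurable borel"
    and fin: "\<And>t. (\<integral>\<^sup>+x. ennreal (F x t) \<partial>lborel) < \<infinity>"
  shows "logconcave (\<lambda>t. enn2real (\<integral>\<^sup>+x. ennreal (F x t) \<partial>lborel))"
proof (rule logconcaveI)
  fix s t l :: real
  assume l: "0 < l" "l < 1"
  have lc: "logconcave (\<lambda>x. F x u)" for u
  proof (rule logconcaveI)
    fix x y l :: real
    assume "0 < l" "l < 1"
    moreover have "l * u + (1 - l) * u = u" by (simp add: algebra_simps)
    ultimately show "F x u powr l * F y u powr (1 - l) \<le> F (l * x + (1 - l) * y) u"
      using joint[of l x u y u] by simp
  qed (rule nonneg)
  have "ennreal (enn2real (\<integral>\<^sup>+x. ennreal (F x s) \<partial>lborel) powr l * enn2real (\<integral>\<^sup>+x. ennreal (F x t) \<partial>lborel) powr (1 - l))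
      \<le> (\<integral>\<^sup>+x. ennreal (F x (l * s + (1 - l) * t)) \<partial>lborel)"
    using l by (intro prekopa_leindler lc nonneg joint fin) auto
  also have "\<dots> = ennreal (enn2real (\<integral>\<^sup>+x. ennreal (F x (l * s + (1 - l) * t)) \<partial>lborel))"
    using fin by (simp add: ennreal_enn2real less_top)
  finally show "enn2real (\<integral>\<^sup>+x. ennreal (F x s) \<partial>lborel) powr l * enn2real (\<integral>\<^sup>+x. ennreal (F x t) \<partial>lborel) powr (1 - l)
      \<le> enn2real (\<integral>\<^sup>+x. ennreal (F x (l * s + (1 - l) * t)) \<partial>lborel)"
    by simp
qed simp

lemma pred_atLeast_var[measurable (raw)]:
  fixes f h :: "'a \<Rightarrow> real"
  assumes [measurable]: "f \<in> borel_measurable M" "h \<in> borel_measurable M"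
  shows "Measurable.pred M (\<lambda>x. f x \<in> {h x..})"
  by simp

lemma nn_integral3_swap:
  fixes h :: "real \<Rightarrow> real \<Rightarrow> real \<Rightarrow> ennreal"
  assumes h: "(\<lambda>p. h (fst p) (fst (snd p)) (snd (snd p))) \<in> borel_measurable (lborel \<Otimes>\<^sub>M (lborel \<Otimes>\<^sub>M lborel))"
  shows "(\<integral>\<^sup>+x. (\<integral>\<^sup>+y. (\<integral>\<^sup>+t. h x y t \<partial>lborel) \<partial>lborel) \<partial>lborel)
       = (\<integral>\<^sup>+t. (\<integral>\<^sup>+x. (\<integral>\<^sup>+y. h x y t \<partial>lborel) \<partial>lborel) \<partial>lborel)"
proof -
  have "(\<lambda>q. h x (fst q) (snd q)) \<in> borel_measurable (lborel \<Otimes>\<^sub>M lborel)" for x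
    using measurable_compose[OF _ h, of "\<lambda>q. (x, q)"] by simp
  then have "(\<integral>\<^sup>+x. (\<integral>\<^sup>+y. (\<integral>\<^sup>+t. h x y t \<partial>lborel) \<partial>lborel) \<partial>lborel)
      = (\<integral>\<^sup>+x. (\<integral>\<^sup>+t. (\<integral>\<^sup>+y. h x y t \<partial>lborel) \<partial>lborel) \<partial>lborel)"
    by (intro nn_integral_cong lborel_pair.Fubini'[symmetric]) (simp add: case_prod_beta')
  also have "\<dots> = (\<integral>\<^sup>+t. (\<integral>\<^sup>+x. (\<integral>\<^sup>+y. h x y t \<partial>lborel) \<partial>lborel) \<partial>lborel)"
  proof (rule lborel_pair.Fubini'[symmetric])
    have "(\<lambda>q. h (fst (fst q)) (snd q) (snd (fst q))) \<in> borel_measurable ((lborel \<Otimes>\<^sub>M lborel) \<Otimes>\<^sub>M lborel)"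
      using measurable_compose[OF _ h, of "\<lambda>q. (fst (fst q), snd q, snd (fst q))"] by simp
    then have "(\<lambda>p. \<integral>\<^sup>+y. h (fst p) y (snd p) \<partial>lborel) \<in> borel_measurable (lborel \<Otimes>\<^sub>M lborel)"
      by (intro lborel.borel_measurable_nn_integral) (simp add: case_prod_beta')
    then show "(\<lambda>(x, t). \<integral>\<^sup>+y. h x y t \<partial>lborel) \<in> borel_measurable (lborel \<Otimes>\<^sub>M lborel)"
      by (simp add: case_prod_beta')
  qed
  finally show ?thesis .
qed

lemma nn_integral2_add:
  fixes F G :: "real \<Rightarrow> real \<Rightarrow> ennreal"
  assumes F: "case_prod F \<in> borel_measurable (lborel \<Otimes>\<^sub>M lborel)"
    and G: "case_prod G \<in> borel_measurable (lborel \<Otimes>\<^sub>M lborel)"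
  shows "(\<integral>\<^sup>+x. (\<integral>\<^sup>+y. F x y + G x y \<partial>lborel) \<partial>lborel)
    = (\<integral>\<^sup>+x. (\<integral>\<^sup>+y. F x y \<partial>lborel) \<partial>lborel) + (\<integral>\<^sup>+x. (\<integral>\<^sup>+y. G x y \<partial>lborel) \<partial>lborel)"
proof -
  have "(\<lambda>y. F x y) \<in> borel_measurable lborel" "(\<lambda>y. G x y) \<in> borel_measurable lborel" for x
    using measurable_Pair2[OF F, of x] measurable_Pair2[OF G, of x] by simp_all
  moreover have "(\<lambda>x. \<integral>\<^sup>+y. F x y \<partial>lborel) \<in> borel_measurable lborel"
    "(\<lambda>x. \<integral>\<^sup>+y. G x y \<partial>lborel) \<in> borel_measurable lborel"
    using F G by (auto intro: lborel.borel_measurable_nn_integral)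
  ultimately show ?thesis
    by (simp add: nn_integral_add)
qed

lemma integral2_eq_nn_integral2:
  fixes F :: "real \<Rightarrow> real \<Rightarrow> real"
  assumes F: "case_prod F \<in> borel_measurable (lborel \<Otimes>\<^sub>M lborel)"
    and nonneg: "\<And>x y. 0 \<le> F x y"
    and fin: "\<And>x. (\<integral>\<^sup>+y. ennreal (F x y) \<partial>lborel) < \<infinity>"
  shows "(\<integral>x. (\<integral>y. F x y \<partial>lborel) \<partial>lborel) = enn2real (\<integral>\<^sup>+x. (\<integral>\<^sup>+y. ennreal (F x y) \<partial>lborel) \<partial>lborel)"
proof -
  have "(\<lambda>y. F x y) \<in> borel_measurable lborel" for x
    using measurable_Pair2[OF F, of x] by simp
  then have "(\<integral>x. (\<integral>y. F x y \<partial>lborel) \<partial>lborel) = (\<integral>x. enn2real (\<integral>\<^sup>+y. ennreal (F x y) \<partial>lborel) \<partial>lborel)"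
    using nonneg by (intro Bochner_Integration.integral_cong refl integral_eq_nn_integral) auto
  also have "\<dots> = enn2real (\<integral>\<^sup>+x. ennreal (enn2real (\<integral>\<^sup>+y. ennreal (F x y) \<partial>lborel)) \<partial>lborel)"
    using F by (intro integral_eq_nn_integral) (auto intro: lborel.borel_measurable_nn_integral)
  also have "\<dots> = enn2real (\<integral>\<^sup>+x. (\<integral>\<^sup>+y. ennreal (F x y) \<partial>lborel) \<partial>lborel)"
    using fin by (simp add: ennreal_enn2real less_top)
  finally show ?thesis .
qed

lemma ennreal_eq_nn_integral_indicator:
  "ennreal d = (\<integral>\<^sup>+t. indicator {0..} t * indicator {t..} d \<partial>lborel)"
proof -
  have "(\<lambda>t. indicator {0..} t * indicator {t..} d :: ennreal) = indicator {0..d}"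
    by (auto simp: indicator_def fun_eq_iff)
  then show ?thesis by (simp add: emeasure_lborel_Icc_eq ennreal_neg)
qed

lemma ennreal_max_0_sq_eq_nn_integral:
  "ennreal ((max d 0)\<^sup>2) = (\<integral>\<^sup>+t. ennreal (2 * t) * indicator {0..} t * indicator {t..} d \<partial>lborel)"
proof (cases "0 \<le> d")
  case True
  have "((\<lambda>t. 2 * t) has_integral 2 * ((d\<^sup>2 - 0\<^sup>2) / 2)) {0..d}"
    using True by (intro has_integral_mult_right ident_has_integral)
  then have "(\<integral>\<^sup>+t. ennreal (2 * t) * indicator {0..d} t \<partial>lborel) = ennreal (d\<^sup>2)"
    by (subst nn_integral_has_integral_lebesgue') auto
  moreover have "(\<lambda>t. ennreal (2 * t) * indicator {0..} t * indicator {t..} d) = (\<lambda>t. ennreal (2 * t) * indicator {0..d} t)"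
    by (auto simp: indicator_def fun_eq_iff)
  ultimately show ?thesis using True by simp
next
  case False
  then have "(\<lambda>t. ennreal (2 * t) * indicator {0..} t * indicator {t..} d) = (\<lambda>_. 0)"
    by (auto simp: indicator_def fun_eq_iff)
  with False show ?thesis by simp
qed

lemma nn_integral_mult_eq_nn_integral_shift:
  fixes S :: "real \<Rightarrow> real"
  assumes [measurable]: "S \<in> borel_measurable borel" and nonneg: "\<And>t. 0 \<le> S t"
  shows "(\<integral>\<^sup>+t\<in>{0..}. ennreal (t * S t) \<partial>lborel)
    = (\<integral>\<^sup>+s. (\<integral>\<^sup>+u. indicator {0..} s * indicator {0..} u * ennreal (S (s + u)) \<partial>lborel) \<partial>lborel)"
proof -
  have "(\<integral>\<^sup>+t\<in>{0..}. ennreal (t * S t) \<partial>lborel)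
      = (\<integral>\<^sup>+t. (\<integral>\<^sup>+s. indicator {0..} s * indicator {s..} t * ennreal (S t) \<partial>lborel) \<partial>lborel)"
  proof (intro nn_integral_cong)
    fix t
    have "(\<lambda>s. indicator {0..} s * indicator {s..} t * ennreal (S t)) = (\<lambda>s. ennreal (S t) * indicator {0..t} s)"
      by (auto simp: indicator_def fun_eq_iff)
    then show "ennreal (t * S t) * indicator {0..} t = (\<integral>\<^sup>+s. indicator {0..} s * indicator {s..} t * ennreal (S t) \<partial>lborel)"
      using nonneg[of t]
      by (cases "0 \<le> t") (auto simp: nn_integral_cmult ennreal_mult' mult.commute emeasure_lborel_Icc_eq)
  qed
  also have "\<dots> = (\<integral>\<^sup>+s. (\<integral>\<^sup>+t. indicator {0..} s * indicator {s..} t * ennreal (S t) \<partial>lborel) \<partial>lborel)"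
    by (rule lborel_pair.Fubini') measurable
  also have "\<dots> = (\<integral>\<^sup>+s. (\<integral>\<^sup>+u. indicator {0..} s * indicator {0..} u * ennreal (S (s + u)) \<partial>lborel) \<partial>lborel)"
  proof (rule nn_integral_cong)
    fix s
    have "(\<integral>\<^sup>+t. indicator {s..} t * ennreal (S t) \<partial>lborel) = (\<integral>\<^sup>+u. indicator {s..} (s + u) * ennreal (S (s + u)) \<partial>lborel)"
      using nn_integral_real_affine[of "\<lambda>t. indicator {s..} t * ennreal (S t)" 1 s] by simp
    then show "(\<integral>\<^sup>+t. indicator {0..} s * indicator {s..} t * ennreal (S t) \<partial>lborel)
        = (\<integral>\<^sup>+u. indicator {0..} s * indicator {0..} u * ennreal (S (s + u)) \<partial>lborel)"
      by (simp add: nn_integral_cmult mult.assoc indicator_def)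
  qed
  finally show ?thesis .
qed

lemma nn_integral_mult_le_of_submultiplicative:
  fixes S :: "real \<Rightarrow> real"
  assumes [measurable]: "S \<in> borel_measurable borel" and nonneg: "\<And>t. 0 \<le> S t" and "0 \<le> K"
    and submult: "\<And>s u. 0 \<le> s \<Longrightarrow> 0 \<le> u \<Longrightarrow> S (s + u) \<le> K * S s * S u"
  shows "(\<integral>\<^sup>+t\<in>{0..}. ennreal (t * S t) \<partial>lborel) \<le> K * (\<integral>\<^sup>+t\<in>{0..}. ennreal (S t) \<partial>lborel)\<^sup>2"
proof -
  have "indicator {0..} s * indicator {0..} u * ennreal (S (s + u))
      \<le> K * (ennreal (S s) * indicator {0..} s) * (ennreal (S u) * indicator {0..} u)" for s u
    using submult[of s u] nonneg \<open>0 \<le> K\<close>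
    by (auto simp: indicator_def ennreal_mult[symmetric] intro!: ennreal_leI)
  then have "(\<integral>\<^sup>+t\<in>{0..}. ennreal (t * S t) \<partial>lborel)
      \<le> (\<integral>\<^sup>+s. (\<integral>\<^sup>+u. K * (ennreal (S s) * indicator {0..} s) * (ennreal (S u) * indicator {0..} u) \<partial>lborel) \<partial>lborel)"
    unfolding nn_integral_mult_eq_nn_integral_shift[OF assms(1,2)] by (intro nn_integral_mono)
  also have "\<dots> = (\<integral>\<^sup>+s. K * (ennreal (S s) * indicator {0..} s) * (\<integral>\<^sup>+u\<in>{0..}. ennreal (S u) \<partial>lborel) \<partial>lborel)"
    by (intro nn_integral_cong nn_integral_cmult) measurable
  also have "\<dots> = (\<integral>\<^sup>+s. K * (ennreal (S s) * indicator {0..} s) \<partial>lborel) * (\<integral>\<^sup>+u\<in>{0..}. ennreal (S u) \<partial>lborel)"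
    by (rule nn_integral_multc) measurable
  also have "\<dots> = K * (\<integral>\<^sup>+t\<in>{0..}. ennreal (S t) \<partial>lborel)\<^sup>2"
    by (subst nn_integral_cmult) (simp_all add: power2_eq_square mult.assoc)
  finally show ?thesis .
qed

lemma abs_diff_le_weight: "\<bar>x - y\<bar> \<le> 2 * (1 + x\<^sup>2) * (1 + (y::real)\<^sup>2)"
  and diff_sq_le_weight: "(x - y)\<^sup>2 \<le> 2 * (1 + x\<^sup>2) * (1 + (y::real)\<^sup>2)"
proof -
  have "\<bar>x - y\<bar> \<le> 1 + (x - y)\<^sup>2"
  proof (cases "\<bar>x - y\<bar> \<le> 1")
    case True
    then show ?thesis using zero_le_power2[of "x - y"] by linarith
  next
    case False
    then have "\<bar>x - y\<bar> * 1 \<le> \<bar>x - y\<bar> * \<bar>x - y\<bar>" by (intro mult_left_mono) auto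
    then show ?thesis by (simp add: power2_eq_square)
  qed
  moreover have "(x - y)\<^sup>2 + (x + y)\<^sup>2 = 2 * x\<^sup>2 + 2 * y\<^sup>2"
    by (simp add: power2_eq_square algebra_simps)
  moreover have "2 * (1 + x\<^sup>2) * (1 + y\<^sup>2) = 2 + 2 * x\<^sup>2 + 2 * y\<^sup>2 + 2 * x\<^sup>2 * y\<^sup>2"
    by (simp add: algebra_simps)
  moreover have "0 \<le> (x + y)\<^sup>2" "0 \<le> x\<^sup>2 * y\<^sup>2" by simp_all
  ultimately show "\<bar>x - y\<bar> \<le> 2 * (1 + x\<^sup>2) * (1 + y\<^sup>2)" "(x - y)\<^sup>2 \<le> 2 * (1 + x\<^sup>2) * (1 + y\<^sup>2)"
    by linarith+
qed

section \<open>Log-concave probability densities\<close>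

locale logconcave_pdf =
  fixes g :: "real \<Rightarrow> real"
  assumes measurable_g [measurable]: "g \<in> borel_measurable borel"
    and logconcave_g: "logconcave g"
    and nn_integral_g: "(\<integral>\<^sup>+x. ennreal (g x) \<partial>lborel) = 1"
    and second_moment_finite: "(\<integral>\<^sup>+x. ennreal (x\<^sup>2 * g x) \<partial>lborel) < \<infinity>"
begin

lemma g_nonneg: "0 \<le> g x"
  using logconcave_g by (rule logconcave_nonneg)

lemma nn_integral_g_mult_le_1:
  assumes "\<And>x. h x \<le> 1"
  shows "(\<integral>\<^sup>+x. ennreal (g x * h x) \<partial>lborel) \<le> 1"
proof -
  have "(\<integral>\<^sup>+x. ennreal (g x * h x) \<partial>lborel) \<le> (\<integral>\<^sup>+x. ennreal (g x) \<partial>lborel)"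
    using assms g_nonneg by (intro nn_integral_mono ennreal_leI) (simp add: mult_left_le)
  then show ?thesis by (simp add: nn_integral_g)
qed

lemma nn_integral_g_mult_finite:
  assumes "\<And>x. h x \<le> 1"
  shows "(\<integral>\<^sup>+x. ennreal (g x * h x) \<partial>lborel) < \<infinity>"
proof -
  have "(\<integral>\<^sup>+x. ennreal (g x * h x) \<partial>lborel) \<le> 1"
    using assms by (rule nn_integral_g_mult_le_1)
  then show ?thesis by (simp add: le_less_trans)
qed

lemma ennreal_enn2real_nn_integral_g_mult:
  assumes "\<And>x. h x \<le> 1"
  shows "ennreal (enn2real (\<integral>\<^sup>+x. ennreal (g x * h x) \<partial>lborel)) = (\<integral>\<^sup>+x. ennreal (g x * h x) \<partial>lborel)"
  using nn_integral_g_mult_finite[of h] assms by (simp add: ennreal_enn2real less_top)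

definition mass_atMost :: "real \<Rightarrow> real" where
  "mass_atMost w = enn2real (\<integral>\<^sup>+y. ennreal (g y * indicator {..w} y) \<partial>lborel)"

lemma ennreal_mass_atMost: "ennreal (mass_atMost w) = (\<integral>\<^sup>+y. ennreal (g y * indicator {..w} y) \<partial>lborel)"
  unfolding mass_atMost_def by (rule ennreal_enn2real_nn_integral_g_mult) simp

lemma mass_atMost_nonneg: "0 \<le> mass_atMost w"
  by (simp add: mass_atMost_def)

lemma mass_atMost_le_1: "mass_atMost w \<le> 1"
  using nn_integral_g_mult_le_1[of "indicator {..w}"] by (simp add: ennreal_mass_atMost[symmetric])

lemma mono_mass_atMost: "mono mass_atMost"
proof (rule monoI)
  fix w w' :: real
  assume "w \<le> w'"
  then have "ennreal (mass_atMost w) \<le> ennreal (mass_atMost w')"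
    unfolding ennreal_mass_atMost
    by (intro nn_integral_mono ennreal_leI mult_left_mono) (auto simp: indicator_def g_nonneg)
  then show "mass_atMost w \<le> mass_atMost w'"
    by (simp add: mass_atMost_nonneg)
qed

lemma measurable_mass_atMost [measurable]: "mass_atMost \<in> borel_measurable borel"
  by (rule borel_measurable_mono[OF mono_mass_atMost])

lemma logconcave_mass_atMost: "logconcave mass_atMost"
  unfolding mass_atMost_def
proof (rule logconcave_nn_integral)
  fix x y s t l :: real
  assume l: "0 \<le> l" "l \<le> 1"
  have "(indicator {..s} x :: real) powr l * indicator {..t} y powr (1 - l)
      \<le> indicator {..l * s + (1 - l) * t} (l * x + (1 - l) * y)"
  proof (cases "x \<le> s \<and> y \<le> t")
    case True
    then have "l * x + (1 - l) * y \<le> l * s + (1 - l) * t"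
      using l by (intro add_mono mult_left_mono) auto
    with True show ?thesis by simp
  qed auto
  then show "(g x * indicator {..s} x) powr l * (g y * indicator {..t} y) powr (1 - l)
      \<le> g (l * x + (1 - l) * y) * indicator {..l * s + (1 - l) * t} (l * x + (1 - l) * y)"
    using l logconcave_g by (intro powr_mult_powr_le_mult logconcaveD) (auto simp: g_nonneg)
next
  show "(\<integral>\<^sup>+y. ennreal (g y * indicator {..w} y) \<partial>lborel) < \<infinity>" for w
    by (rule nn_integral_g_mult_finite) simp
qed (auto simp: g_nonneg)

(* tail_diff t is the probability that X - Y >= t for independent X, Y with density g. *)
definition tail_diff :: "real \<Rightarrow> real" where
  "tail_diff t = enn2real (\<integral>\<^sup>+x. ennreal (g x * mass_atMost (x - t)) \<partial>lborel)"

lemma tail_diff_nonneg: "0 \<le> tail_diff t"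
  by (simp add: tail_diff_def)

lemma measurable_tail_diff [measurable]: "tail_diff \<in> borel_measurable borel"
  unfolding tail_diff_def by measurable

lemma ennreal_tail_diff:
  "ennreal (tail_diff t) = (\<integral>\<^sup>+x. (\<integral>\<^sup>+y. ennreal (g x * g y) * indicator {t..} (x - y) \<partial>lborel) \<partial>lborel)"
proof -
  have "ennreal (tail_diff t) = (\<integral>\<^sup>+x. ennreal (g x) * ennreal (mass_atMost (x - t)) \<partial>lborel)"
    unfolding tail_diff_def
    by (subst ennreal_enn2real_nn_integral_g_mult) (auto simp: mass_atMost_le_1 ennreal_mult g_nonneg mass_atMost_nonneg)
  also have "\<dots> = (\<integral>\<^sup>+x. (\<integral>\<^sup>+y. ennreal (g x) * ennreal (g y * indicator {..x - t} y) \<partial>lborel) \<partial>lborel)"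
    unfolding ennreal_mass_atMost by (intro nn_integral_cong nn_integral_cmult[symmetric]) measurable
  also have "\<dots> = (\<integral>\<^sup>+x. (\<integral>\<^sup>+y. ennreal (g x * g y) * indicator {t..} (x - y) \<partial>lborel) \<partial>lborel)"
    by (intro nn_integral_cong) (auto simp: ennreal_mult g_nonneg indicator_def)
  finally show ?thesis .
qed

lemma logconcave_tail_diff: "logconcave tail_diff"
  unfolding tail_diff_def
proof (rule logconcave_nn_integral)
  fix x y s t l :: real
  assume l: "0 \<le> l" "l \<le> 1"
  have "l * x + (1 - l) * y - (l * s + (1 - l) * t) = l * (x - s) + (1 - l) * (y - t)"
    by (simp add: algebra_simps)
  then have "mass_atMost (x - s) powr l * mass_atMost (y - t) powr (1 - l)
      \<le> mass_atMost (l * x + (1 - l) * y - (l * s + (1 - l) * t))"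
    using l by (simp add: logconcaveD[OF logconcave_mass_atMost])
  then show "(g x * mass_atMost (x - s)) powr l * (g y * mass_atMost (y - t)) powr (1 - l)
      \<le> g (l * x + (1 - l) * y) * mass_atMost (l * x + (1 - l) * y - (l * s + (1 - l) * t))"
    using l logconcave_g by (intro powr_mult_powr_le_mult logconcaveD) (auto simp: g_nonneg mass_atMost_nonneg)
next
  show "(\<integral>\<^sup>+x. ennreal (g x * mass_atMost (x - t)) \<partial>lborel) < \<infinity>" for t
    by (rule nn_integral_g_mult_finite) (rule mass_atMost_le_1)
qed (auto simp: g_nonneg mass_atMost_nonneg)

lemma nn_integral_prod_g_swap:
  fixes \<psi> :: "real \<Rightarrow> ennreal"
  assumes [measurable]: "\<psi> \<in> borel_measurable borel"
  shows "(\<integral>\<^sup>+x. (\<integral>\<^sup>+y. ennreal (g x * g y) * \<psi> (y - x) \<partial>lborel) \<partial>lborel)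
    = (\<integral>\<^sup>+x. (\<integral>\<^sup>+y. ennreal (g x * g y) * \<psi> (x - y) \<partial>lborel) \<partial>lborel)"
proof -
  have "(\<integral>\<^sup>+x. (\<integral>\<^sup>+y. ennreal (g x * g y) * \<psi> (y - x) \<partial>lborel) \<partial>lborel)
      = (\<integral>\<^sup>+y. (\<integral>\<^sup>+x. ennreal (g x * g y) * \<psi> (y - x) \<partial>lborel) \<partial>lborel)"
    by (rule lborel_pair.Fubini'[symmetric]) measurable
  then show ?thesis by (simp add: mult.commute)
qed

lemma nn_integral_prod_g_sym:
  fixes \<psi> :: "real \<Rightarrow> ennreal"
  assumes [measurable]: "\<psi> \<in> borel_measurable borel"
  shows "(\<integral>\<^sup>+x. (\<integral>\<^sup>+y. ennreal (g x * g y) * (\<psi> (x - y) + \<psi> (y - x)) \<partial>lborel) \<partial>lborel)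
    = 2 * (\<integral>\<^sup>+x. (\<integral>\<^sup>+y. ennreal (g x * g y) * \<psi> (x - y) \<partial>lborel) \<partial>lborel)"
proof -
  have "(\<integral>\<^sup>+x. (\<integral>\<^sup>+y. ennreal (g x * g y) * (\<psi> (x - y) + \<psi> (y - x)) \<partial>lborel) \<partial>lborel)
      = (\<integral>\<^sup>+x. (\<integral>\<^sup>+y. ennreal (g x * g y) * \<psi> (x - y) \<partial>lborel) \<partial>lborel)
        + (\<integral>\<^sup>+x. (\<integral>\<^sup>+y. ennreal (g x * g y) * \<psi> (y - x) \<partial>lborel) \<partial>lborel)"
    unfolding distrib_left by (rule nn_integral2_add) measurable
  then show ?thesis by (simp add: nn_integral_prod_g_swap mult_2)
qed

lemma tail_diff_0_ge: "1 / 2 \<le> tail_diff 0"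
proof -
  have "1 = (\<integral>\<^sup>+x. (\<integral>\<^sup>+y. ennreal (g x * g y) \<partial>lborel) \<partial>lborel)"
    by (simp add: ennreal_mult g_nonneg nn_integral_cmult nn_integral_multc nn_integral_g)
  also have "\<dots> \<le> (\<integral>\<^sup>+x. (\<integral>\<^sup>+y. ennreal (g x * g y) * (indicator {0..} (x - y) + indicator {0..} (y - x)) \<partial>lborel) \<partial>lborel)"
  proof -
    have "(1 :: ennreal) \<le> indicator {0..} (x - y) + indicator {0..} (y - x)" for x y :: real
      by (auto simp: indicator_def)
    then have "ennreal (g x * g y) \<le> ennreal (g x * g y) * (indicator {0..} (x - y) + indicator {0..} (y - x))" for x y
      using mult_left_mono[of 1 _ "ennreal (g x * g y)"] by simp
    then show ?thesis by (intro nn_integral_mono)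
  qed
  also have "\<dots> = 2 * ennreal (tail_diff 0)"
    by (simp add: nn_integral_prod_g_sym ennreal_tail_diff)
  finally have "ennreal 1 \<le> ennreal (2 * tail_diff 0)"
    by (simp add: ennreal_mult tail_diff_nonneg)
  then show ?thesis by (simp add: tail_diff_nonneg)
qed

lemma tail_diff_add_le:
  assumes "0 \<le> s" "0 \<le> u"
  shows "tail_diff (s + u) \<le> 2 * tail_diff s * tail_diff u"
proof -
  have "tail_diff (s + u) * (1 / 2) \<le> tail_diff (s + u) * tail_diff 0"
    using tail_diff_0_ge tail_diff_nonneg by (intro mult_left_mono)
  also have "\<dots> \<le> tail_diff s * tail_diff u"
    using assms by (rule logconcave_add_mult_le[OF logconcave_tail_diff])
  finally show ?thesis by simp
qed

lemma nn_integral_weight_finite: "(\<integral>\<^sup>+y. ennreal ((1 + y\<^sup>2) * g y) \<partial>lborel) < \<infinity>"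
proof -
  have "(\<integral>\<^sup>+y. ennreal ((1 + y\<^sup>2) * g y) \<partial>lborel) = (\<integral>\<^sup>+y. ennreal (g y) + ennreal (y\<^sup>2 * g y) \<partial>lborel)"
    by (intro nn_integral_cong) (simp add: g_nonneg distrib_right)
  also have "\<dots> = 1 + (\<integral>\<^sup>+y. ennreal (y\<^sup>2 * g y) \<partial>lborel)"
    by (simp add: nn_integral_add nn_integral_g)
  finally show ?thesis using second_moment_finite by simp
qed

lemma nn_integral_dominated_finite:
  fixes F :: "real \<Rightarrow> real \<Rightarrow> real"
  assumes dom: "\<And>x y. F x y \<le> 2 * (1 + x\<^sup>2) * (1 + y\<^sup>2) * g x * g y"
  shows "(\<integral>\<^sup>+y. ennreal (F x y) \<partial>lborel) < \<infinity>"
    and "(\<integral>\<^sup>+x. (\<integral>\<^sup>+y. ennreal (F x y) \<partial>lborel) \<partial>lborel) < \<infinity>"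
proof -
  define w where "w y = ennreal ((1 + y\<^sup>2) * g y)" for y
  define W where "W = (\<integral>\<^sup>+y. w y \<partial>lborel)"
  have W: "W < \<infinity>" unfolding W_def w_def by (rule nn_integral_weight_finite)
  have "ennreal (F x y) \<le> ennreal (2 * ((1 + x\<^sup>2) * g x) * ((1 + y\<^sup>2) * g y))" for x y
    using dom[of x y] by (intro ennreal_leI) (simp add: mult_ac)
  also have "\<dots> x y = 2 * w x * w y" for x y
    using g_nonneg[of x] g_nonneg[of y] by (simp add: w_def ennreal_mult)
  finally have "(\<integral>\<^sup>+y. ennreal (F x y) \<partial>lborel) \<le> (\<integral>\<^sup>+y. 2 * w x * w y \<partial>lborel)" for x
    by (intro nn_integral_mono)
  also have "\<dots> x = 2 * w x * W" for x
    by (simp add: W_def w_def nn_integral_cmult)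
  finally have inner: "(\<integral>\<^sup>+y. ennreal (F x y) \<partial>lborel) \<le> 2 * w x * W" for x .
  then show "(\<integral>\<^sup>+y. ennreal (F x y) \<partial>lborel) < \<infinity>"
    by (rule le_less_trans) (use W in \<open>simp add: w_def ennreal_mult_less_top\<close>)
  have "(\<integral>\<^sup>+x. (\<integral>\<^sup>+y. ennreal (F x y) \<partial>lborel) \<partial>lborel) \<le> (\<integral>\<^sup>+x. 2 * w x * W \<partial>lborel)"
    by (intro nn_integral_mono inner)
  also have "\<dots> = 2 * W * W"
    by (simp add: W_def w_def nn_integral_cmult nn_integral_multc)
  finally show "(\<integral>\<^sup>+x. (\<integral>\<^sup>+y. ennreal (F x y) \<partial>lborel) \<partial>lborel) < \<infinity>"
    by (rule le_less_trans) (use W in \<open>simp add: ennreal_mult_less_top\<close>)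
qed

lemma nn_integral_prod_g_layer:
  fixes h :: "real \<Rightarrow> ennreal"
  assumes [measurable]: "h \<in> borel_measurable borel"
  shows "(\<integral>\<^sup>+x. (\<integral>\<^sup>+y. ennreal (g x * g y) * (\<integral>\<^sup>+t. h t * indicator {t..} (x - y) \<partial>lborel) \<partial>lborel) \<partial>lborel)
    = (\<integral>\<^sup>+t. h t * ennreal (tail_diff t) \<partial>lborel)"
proof -
  have inner [measurable]: "(\<lambda>y. ennreal (g x * g y) * indicator {t..} (x - y)) \<in> borel_measurable lborel"
    "(\<lambda>x. \<integral>\<^sup>+y. ennreal (g x * g y) * indicator {t..} (x - y) \<partial>lborel) \<in> borel_measurable lborel" for x t
    by measurable
  have "(\<integral>\<^sup>+x. (\<integral>\<^sup>+y. ennreal (g x * g y) * (\<integral>\<^sup>+t. h t * indicator {t..} (x - y) \<partial>lborel) \<partial>lborel) \<partial>lborel)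
      = (\<integral>\<^sup>+x. (\<integral>\<^sup>+y. (\<integral>\<^sup>+t. ennreal (g x * g y) * (h t * indicator {t..} (x - y)) \<partial>lborel) \<partial>lborel) \<partial>lborel)"
    by (intro nn_integral_cong nn_integral_cmult[symmetric]) measurable
  also have "\<dots> = (\<integral>\<^sup>+x. (\<integral>\<^sup>+y. (\<integral>\<^sup>+t. h t * (ennreal (g x * g y) * indicator {t..} (x - y)) \<partial>lborel) \<partial>lborel) \<partial>lborel)"
    by (simp add: mult.left_commute)
  also have "\<dots> = (\<integral>\<^sup>+t. (\<integral>\<^sup>+x. (\<integral>\<^sup>+y. h t * (ennreal (g x * g y) * indicator {t..} (x - y)) \<partial>lborel) \<partial>lborel) \<partial>lborel)"
    by (rule nn_integral3_swap) measurable
  also have "\<dots> = (\<integral>\<^sup>+t. h t * (\<integral>\<^sup>+x. (\<integral>\<^sup>+y. ennreal (g x * g y) * indicator {t..} (x - y) \<partial>lborel) \<partial>lborel) \<partial>lborel)"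
    by (simp only: nn_integral_cmult[OF inner(1)] nn_integral_cmult[OF inner(2)])
  finally show ?thesis
    unfolding ennreal_tail_diff .
qed

lemma nn_integral_prod_g_pos_part:
  "(\<integral>\<^sup>+x. (\<integral>\<^sup>+y. ennreal (g x * g y) * ennreal (x - y) \<partial>lborel) \<partial>lborel)
    = (\<integral>\<^sup>+t\<in>{0..}. ennreal (tail_diff t) \<partial>lborel)"
  using nn_integral_prod_g_layer[of "indicator {0..}"]
  by (simp add: ennreal_eq_nn_integral_indicator[symmetric] mult.commute)

lemma nn_integral_prod_g_pos_part_sq:
  "(\<integral>\<^sup>+x. (\<integral>\<^sup>+y. ennreal (g x * g y) * ennreal ((max (x - y) 0)\<^sup>2) \<partial>lborel) \<partial>lborel)
    = 2 * (\<integral>\<^sup>+t\<in>{0..}. ennreal (t * tail_diff t) \<partial>lborel)"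
proof -
  have "(\<integral>\<^sup>+x. (\<integral>\<^sup>+y. ennreal (g x * g y) * ennreal ((max (x - y) 0)\<^sup>2) \<partial>lborel) \<partial>lborel)
      = (\<integral>\<^sup>+t. ennreal (2 * t) * indicator {0..} t * ennreal (tail_diff t) \<partial>lborel)"
    using nn_integral_prod_g_layer[of "\<lambda>t. ennreal (2 * t) * indicator {0..} t"]
    by (simp add: ennreal_max_0_sq_eq_nn_integral mult.assoc)
  also have "\<dots> = (\<integral>\<^sup>+t. 2 * (ennreal (t * tail_diff t) * indicator {0..} t) \<partial>lborel)"
    by (intro nn_integral_cong) (auto simp: indicator_def ennreal_mult tail_diff_nonneg mult.assoc)
  also have "\<dots> = 2 * (\<integral>\<^sup>+t\<in>{0..}. ennreal (t * tail_diff t) \<partial>lborel)"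
    by (rule nn_integral_cmult) measurable
  finally show ?thesis .
qed

lemma nn_integral_abs_diff:
  "(\<integral>\<^sup>+x. (\<integral>\<^sup>+y. ennreal (\<bar>x - y\<bar> * g x * g y) \<partial>lborel) \<partial>lborel)
    = 2 * (\<integral>\<^sup>+t\<in>{0..}. ennreal (tail_diff t) \<partial>lborel)"
proof -
  have "ennreal (\<bar>x - y\<bar> * g x * g y) = ennreal (g x * g y) * (ennreal (x - y) + ennreal (y - x))" for x y
    using g_nonneg[of x] g_nonneg[of y]
    by (cases "x \<le> y") (auto simp: ennreal_mult[symmetric] mult_ac ennreal_neg)
  then have "(\<integral>\<^sup>+x. (\<integral>\<^sup>+y. ennreal (\<bar>x - y\<bar> * g x * g y) \<partial>lborel) \<partial>lborel)
      = (\<integral>\<^sup>+x. (\<integral>\<^sup>+y. ennreal (g x * g y) * (ennreal (x - y) + ennreal (y - x)) \<partial>lborel) \<partial>lborel)"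
    by (simp only:)
  also have "\<dots> = 2 * (\<integral>\<^sup>+x. (\<integral>\<^sup>+y. ennreal (g x * g y) * ennreal (x - y) \<partial>lborel) \<partial>lborel)"
    by (rule nn_integral_prod_g_sym[of ennreal]) measurable
  finally show ?thesis
    unfolding nn_integral_prod_g_pos_part .
qed

lemma nn_integral_sq_diff_le:
  "(\<integral>\<^sup>+x. (\<integral>\<^sup>+y. ennreal ((x - y)\<^sup>2 * g x * g y) \<partial>lborel) \<partial>lborel)
    \<le> 8 * (\<integral>\<^sup>+t\<in>{0..}. ennreal (tail_diff t) \<partial>lborel)\<^sup>2"
proof -
  have "ennreal ((x - y)\<^sup>2 * g x * g y)
      = ennreal (g x * g y) * (ennreal ((max (x - y) 0)\<^sup>2) + ennreal ((max (y - x) 0)\<^sup>2))" for x y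
    using g_nonneg[of x] g_nonneg[of y]
    by (cases "x \<le> y") (auto simp: ennreal_mult[symmetric] mult_ac max_def power2_commute)
  then have "(\<integral>\<^sup>+x. (\<integral>\<^sup>+y. ennreal ((x - y)\<^sup>2 * g x * g y) \<partial>lborel) \<partial>lborel)
      = (\<integral>\<^sup>+x. (\<integral>\<^sup>+y. ennreal (g x * g y) * (ennreal ((max (x - y) 0)\<^sup>2) + ennreal ((max (y - x) 0)\<^sup>2)) \<partial>lborel) \<partial>lborel)"
    by (simp only:)
  also have "\<dots> = 2 * (\<integral>\<^sup>+x. (\<integral>\<^sup>+y. ennreal (g x * g y) * ennreal ((max (x - y) 0)\<^sup>2) \<partial>lborel) \<partial>lborel)"
    by (rule nn_integral_prod_g_sym[of "\<lambda>d. ennreal ((max d 0)\<^sup>2)"]) measurable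
  also have "\<dots> = 4 * (\<integral>\<^sup>+t\<in>{0..}. ennreal (t * tail_diff t) \<partial>lborel)"
    unfolding nn_integral_prod_g_pos_part_sq by (subst mult.assoc[symmetric]) simp
  also have "\<dots> \<le> 4 * (2 * (\<integral>\<^sup>+t\<in>{0..}. ennreal (tail_diff t) \<partial>lborel)\<^sup>2)"
  proof -
    have "(\<integral>\<^sup>+t\<in>{0..}. ennreal (t * tail_diff t) \<partial>lborel) \<le> ennreal 2 * (\<integral>\<^sup>+t\<in>{0..}. ennreal (tail_diff t) \<partial>lborel)\<^sup>2"
      by (rule nn_integral_mult_le_of_submultiplicative) (simp_all add: tail_diff_nonneg tail_diff_add_le)
    then show ?thesis by (intro mult_left_mono) simp_all
  qed
  also have "\<dots> = 8 * (\<integral>\<^sup>+t\<in>{0..}. ennreal (tail_diff t) \<partial>lborel)\<^sup>2"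
    by (subst mult.assoc[symmetric]) simp
  finally show ?thesis .
qed

theorem SD_dens_le_GMD_dens: "SD_dens g \<le> GMD_dens g"
proof -
  define R where "R = (\<integral>\<^sup>+t\<in>{0..}. ennreal (tail_diff t) \<partial>lborel)"
  have abs_dom: "\<bar>x - y\<bar> * g x * g y \<le> 2 * (1 + x\<^sup>2) * (1 + y\<^sup>2) * g x * g y" for x y
    using mult_right_mono[OF abs_diff_le_weight[of x y] mult_nonneg_nonneg[OF g_nonneg g_nonneg]] g_nonneg[of x] g_nonneg[of y]
    by (simp only: mult.assoc)
  have sq_dom: "(x - y)\<^sup>2 * g x * g y \<le> 2 * (1 + x\<^sup>2) * (1 + y\<^sup>2) * g x * g y" for x y
    using mult_right_mono[OF diff_sq_le_weight[of x y] mult_nonneg_nonneg[OF g_nonneg g_nonneg]] g_nonneg[of x] g_nonneg[of y]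
    by (simp only: mult.assoc)
  have "2 * R < \<infinity>"
    using nn_integral_dominated_finite(2)[OF abs_dom] by (simp add: nn_integral_abs_diff R_def)
  then obtain r where R: "R = ennreal r" and r: "0 \<le> r"
    by (cases R) (auto simp: ennreal_mult_less_top)
  have "GMD_dens g = enn2real (2 * R)"
    unfolding GMD_dens_def R_def nn_integral_abs_diff[symmetric]
    by (rule integral2_eq_nn_integral2) (use g_nonneg nn_integral_dominated_finite(1)[OF abs_dom] in auto)
  also have "\<dots> = 2 * r" using R r by (simp add: enn2real_mult)
  finally have GMD: "GMD_dens g = 2 * r" .
  have "(\<integral>x. (\<integral>y. (x - y)\<^sup>2 * g x * g y \<partial>lborel) \<partial>lborel) = enn2real (\<integral>\<^sup>+x. (\<integral>\<^sup>+y. ennreal ((x - y)\<^sup>2 * g x * g y) \<partial>lborel) \<partial>lborel)"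
    by (rule integral2_eq_nn_integral2) (use g_nonneg nn_integral_dominated_finite(1)[OF sq_dom] in auto)
  also have "\<dots> \<le> enn2real (ennreal (8 * r\<^sup>2))"
    using nn_integral_sq_diff_le R r
    by (intro enn2real_mono) (auto simp: R_def ennreal_mult ennreal_power ennreal_mult_less_top)
  also have "\<dots> = 8 * r\<^sup>2"
    by simp
  finally have "SD_dens g \<le> sqrt (1 / 2 * (8 * r\<^sup>2))"
    unfolding SD_dens_def by (intro real_sqrt_le_mono) simp
  also have "1 / 2 * (8 * r\<^sup>2) = (2 * r)\<^sup>2"
    by (simp add: power2_eq_square)
  also have "sqrt ((2 * r)\<^sup>2) = 2 * r"
    unfolding real_sqrt_abs using r by simp
  finally show ?thesis unfolding GMD .
qed

end

section \<open>Truncated densities\<close>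

definition trunc_density :: "'a measure \<Rightarrow> ('a \<Rightarrow> real) \<Rightarrow> (real \<Rightarrow> real) \<Rightarrow> real set \<Rightarrow> real \<Rightarrow> real" where
  "trunc_density M X f A x = indicator A x * f x / measure M {\<omega> \<in> space M. X \<omega> \<in> A}"

lemma upper_trunc_density_eq: "upper_trunc_density M X f u = trunc_density M X f {u<..}"
  by (simp add: fun_eq_iff upper_trunc_density_def trunc_density_def)

lemma lower_trunc_density_eq: "lower_trunc_density M X f u = trunc_density M X f {..u}"
  by (simp add: fun_eq_iff lower_trunc_density_def trunc_density_def)

lemma logconcave_trunc_density_subset:
  assumes lc: "logconcave (trunc_density M X f B)" and pos: "0 < measure M {\<omega> \<in> space M. X \<omega> \<in> B}"
    and "A \<subseteq> B" "convex A"
  shows "logconcave (trunc_density M X f A)"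
proof -
  define pA pB where "pA = measure M {\<omega> \<in> space M. X \<omega> \<in> A}" and "pB = measure M {\<omega> \<in> space M. X \<omega> \<in> B}"
  have "trunc_density M X f A = (\<lambda>x. (indicator A x * trunc_density M X f B x) * (pB / pA))"
    using \<open>A \<subseteq> B\<close> pos by (auto simp: fun_eq_iff indicator_def trunc_density_def pA_def pB_def)
  moreover have "logconcave (\<lambda>x. (indicator A x * trunc_density M X f B x) * (pB / pA))"
    using \<open>convex A\<close> lc divide_nonneg_nonneg[OF measure_nonneg measure_nonneg]
    by (intro logconcave_mult logconcave_indicator logconcave_const) (simp_all add: pA_def pB_def)
  ultimately show ?thesis by simp
qed

lemma logconcave_pdf_trunc_density:
  assumes "prob_space M" and D: "distributed M lborel X (\<lambda>x. ennreal (f x))" and f_nonneg: "\<And>x. 0 \<le> f x"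
    and X2: "integrable M (\<lambda>\<omega>. (X \<omega>)\<^sup>2)" and A [measurable]: "A \<in> sets borel"
    and pos: "0 < measure M {\<omega> \<in> space M. X \<omega> \<in> A}"
    and lc: "logconcave (trunc_density M X f A)"
  shows "logconcave_pdf (trunc_density M X f A)"
proof -
  interpret prob_space M by fact
  have [measurable]: "f \<in> borel_measurable borel"
    using distributed_real_measurable[OF _ D] f_nonneg by simp
  have [measurable]: "X \<in> borel_measurable M"
    using distributed_measurable[OF D] by simp
  define p where "p = measure M {\<omega> \<in> space M. X \<omega> \<in> A}"
  have trunc_eq: "ennreal (trunc_density M X f A x) = ennreal (1 / p) * (ennreal (f x) * indicator A x)" for x
    using pos f_nonneg by (auto simp: trunc_density_def p_def indicator_def ennreal_mult[symmetric])
  have mass: "(\<integral>\<^sup>+x. ennreal (f x) * indicator A x \<partial>lborel) = ennreal p"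
    using distributed_emeasure[OF D, of A] by (simp add: emeasure_eq_measure p_def vimage_def Int_def conj_commute)
  show ?thesis
  proof
    show "trunc_density M X f A \<in> borel_measurable borel"
      unfolding trunc_density_def by measurable
    show "logconcave (trunc_density M X f A)" by (fact lc)
    show "(\<integral>\<^sup>+x. ennreal (trunc_density M X f A x) \<partial>lborel) = 1"
      using pos by (simp add: trunc_eq nn_integral_cmult mass ennreal_mult[symmetric] p_def)
    have "(\<integral>\<^sup>+x. ennreal (f x) * ennreal (x\<^sup>2) \<partial>lborel) = (\<integral>\<^sup>+\<omega>. ennreal ((X \<omega>)\<^sup>2) \<partial>M)"
      by (rule distributed_nn_integral[OF D]) measurable
    also have "\<dots> < \<infinity>"
      using integrableD(2)[OF X2] by (simp add: less_top)
    finally have moment: "(\<integral>\<^sup>+x. ennreal (f x) * ennreal (x\<^sup>2) \<partial>lborel) < \<infinity>" .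
    have "(\<integral>\<^sup>+x. ennreal (x\<^sup>2 * trunc_density M X f A x) \<partial>lborel)
        \<le> (\<integral>\<^sup>+x. ennreal (1 / p) * (ennreal (f x) * ennreal (x\<^sup>2)) \<partial>lborel)"
      using pos f_nonneg
      by (intro nn_integral_mono) (auto simp: trunc_density_def p_def indicator_def ennreal_mult[symmetric] mult_ac)
    also have "\<dots> = ennreal (1 / p) * (\<integral>\<^sup>+x. ennreal (f x) * ennreal (x\<^sup>2) \<partial>lborel)"
      by (rule nn_integral_cmult) measurable
    also have "\<dots> < \<infinity>"
      using moment by (simp add: ennreal_mult_less_top)
    finally show "(\<integral>\<^sup>+x. ennreal (x\<^sup>2 * trunc_density M X f A x) \<partial>lborel) < \<infinity>" .
  qed
qed

theorem SD_dens_le_GMD_dens_trunc_density: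
  assumes "prob_space M" and D: "distributed M lborel X (\<lambda>x. ennreal (f x))" and "\<And>x. 0 \<le> f x"
    and "integrable M (\<lambda>\<omega>. (X \<omega>)\<^sup>2)" and "A \<subseteq> B" "convex A" "A \<in> sets borel" "B \<in> sets borel"
    and pos: "0 < measure M {\<omega> \<in> space M. X \<omega> \<in> A}"
    and lc: "log_concave_density (trunc_density M X f B)"
  shows "SD_dens (trunc_density M X f A) \<le> GMD_dens (trunc_density M X f A)"
proof -
  interpret prob_space M by fact
  have [measurable]: "X \<in> borel_measurable M" "B \<in> sets borel"
    using distributed_measurable[OF D] \<open>B \<in> sets borel\<close> by simp_all
  have "measure M {\<omega> \<in> space M. X \<omega> \<in> A} \<le> measure M {\<omega> \<in> space M. X \<omega> \<in> B}"
    using \<open>A \<subseteq> B\<close> by (intro finite_measure_mono) (blast, measurable)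
  with pos have pos_B: "0 < measure M {\<omega> \<in> space M. X \<omega> \<in> B}" by simp
  have "logconcave (trunc_density M X f B)"
    using lc \<open>\<And>x. 0 \<le> f x\<close> by (intro log_concave_density_imp_logconcave) (simp add: trunc_density_def)
  then have "logconcave (trunc_density M X f A)"
    using pos_B \<open>A \<subseteq> B\<close> \<open>convex A\<close> by (rule logconcave_trunc_density_subset)
  then interpret logconcave_pdf "trunc_density M X f A"
    by (rule logconcave_pdf_trunc_density[OF assms(1-4,7) pos])
  show ?thesis by (rule SD_dens_le_GMD_dens)
qed

theorem proposition9:
  fixes M :: "'a measure" and X :: "'a \<Rightarrow> real" and f :: "real \<Rightarrow> real" and ustar :: real
  assumes "prob_space M"
    and "distributed M lborel X (\<lambda>x. ennreal (f x))"
    and "\<And>x. 0 \<le> f x"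
    and "integrable M (\<lambda>\<omega>. (X \<omega>)\<^sup>2)"
  shows "(log_concave_density (upper_trunc_density M X f ustar) \<longrightarrow>
            (\<forall>u \<ge> ustar. 0 < measure M {\<omega> \<in> space M. u < X \<omega>} \<longrightarrow>
               SD_dens (upper_trunc_density M X f u) \<le> GMD_dens (upper_trunc_density M X f u)))
       \<and> (log_concave_density (lower_trunc_density M X f ustar) \<longrightarrow>
            (\<forall>u \<le> ustar. 0 < measure M {\<omega> \<in> space M. X \<omega> \<le> u} \<longrightarrow>
               SD_dens (lower_trunc_density M X f u) \<le> GMD_dens (lower_trunc_density M X f u)))"
  unfolding upper_trunc_density_eq lower_trunc_density_eq
proof (intro conjI impI allI)
  fix u
  assume lc: "log_concave_density (trunc_density M X f {ustar<..})" and "ustar \<le> u"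
    and pos: "0 < measure M {\<omega> \<in> space M. u < X \<omega>}"
  show "SD_dens (trunc_density M X f {u<..}) \<le> GMD_dens (trunc_density M X f {u<..})"
  proof (rule SD_dens_le_GMD_dens_trunc_density[OF assms _ _ _ _ _ lc])
    show "{u<..} \<subseteq> {ustar<..}" using \<open>ustar \<le> u\<close> by auto
  qed (use pos in simp_all)
next
  fix u
  assume lc: "log_concave_density (trunc_density M X f {..ustar})" and "u \<le> ustar"
    and pos: "0 < measure M {\<omega> \<in> space M. X \<omega> \<le> u}"
  show "SD_dens (trunc_density M X f {..u}) \<le> GMD_dens (trunc_density M X f {..u})"
  proof (rule SD_dens_le_GMD_dens_trunc_density[OF assms _ _ _ _ _ lc])
    show "{..u} \<subseteq> {..ustar}" using \<open>u \<le> ustar\<close> by auto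
  qed (use pos in simp_all)
qed

end
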